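(* Fix $\theta\in\Delta\cap\mathbb Q^d$ and $T\in\mathbb N^*(\theta)$, and let $B^*_s$, $B^*_{s,\lambda}$ be as defined in the context. (a) For each $s\ge1$, the family $\{B^*_{s,\lambda}\}_{\lambda\in\mathcal T_{(s-1)T}}$ is i.i.d. under $P^{\mathbf q}$. (b) For $s\ge1$ define $q^*_s\in\mathcal P(\mathbb N)$ by $q^*_s(k)=P^{\mathbf q}(|B^*_{s,\lambda}|=k)$ for $k\in\mathbb N$; by (a) this does not depend on $\lambda$. Then the sequence $(q^*_s)_{s\ge1}$ is i.i.d. under $P$.
   Context: Notation: $\mathbb N=\{0,1,\dots\}$, $\mathbb N^*=\{1,2,\dots\}$, $|\cdot|$ is the $\ell^1$ norm, and $\mathcal P(\mathbb N)$ is the set of probability measures on $\mathbb N$. Directions: $\Delta=\{\theta\in\mathbb R^d:|\theta|\le1\}$ and $\mathbb N^*(\theta)=\{t\in\mathbb N^*:t\theta\in\mathbb Z^d,\ t-t|\theta|\in2\mathbb N\}$. Environment. $\mathbf q=(q_{t,x})_{(t,x)\in\mathbb N\times\mathbb Z^d}$ with $q_{t,x}\in\mathcal P(\mathbb N)$, i.i.d. under $Q$, and $P=\int Q(d\mathbf q)P^{\mathbf q}$. Genealogies. $\mathcal T_t=\{\nu=(\nu_0,\dots,\nu_t)\in(\mathbb N^* )^{1+t}:\nu_0=1\}$, $\mathcal T=\bigcup_t\mathcal T_t$, and $\nu|_t=(\nu_0,\dots,\nu_t)$. Randomness. Under $P^{\mathbf q}$, the variables $X_{t,x,\nu}$ and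 $K_{t,x,\nu}$, $(t,x,\nu)\in\mathbb N\times\mathbb Z^d\times\mathcal T$, are all independent: $X_{t,x,\nu}$ is uniform on the $2d$ nearest neighbours of $x$, and $K_{t,x,\nu}$ has law $q_{t,x}$. Branches. For $(s,z,\lambda)\in\mathbb N\times\mathbb Z^d\times\mathcal T_s$, define $B^{s,z,\lambda}_0=\{(z,\lambda)\}$ and, for $t\ge1$, $$B^{s,z,\lambda}_t=\bigcup_{(x,\nu)\in B^{s,z,\lambda}_{t-1}}\{(y,\mu)\in\mathbb Z^d\times\mathcal T_{s+t}:X_{s+t-1,x,\nu}=y,\ \mu|_{s+t-1}=\nu,\ \mu_{s+t}\le K_{s+t-1,x,\nu}\}.$$ The BRWRE itself is $B_t=B^{0,0,(1)}_t$, and $B_{t,x}=\{(y,\nu)\in B_t:y=x\}$. Embedded process. Set $B^*_0=\{(1)\}$ and, for $s\ge1$, $$B^*_s=\bigcup_{\lambda\in B^*_{s-1}}B^*_{s,\lambda},\qquad B^*_{s,\lambda}=\{\nu\in\mathcal T_{sT}:(sT\theta,\nu)\in B^{(s-1)T,(s-1)T\theta,\lambda}_T\}\quad(\lambda\in\mathcal T_{(s-1)T}).$$ *)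

theory Defs
  imports "HOL-Probability.Probability"
begin

definition l1norm :: "real^'d \<Rightarrow> real" where
  "l1norm \<theta> = (\<Sum>i\<in>UNIV. \<bar>\<theta> $ i\<bar>)"

definition Delta :: "(real^'d) set" where
  "Delta = {\<theta>. l1norm \<theta> \<le> 1}"

definition Nstar_dir :: "real^'d \<Rightarrow> nat set" where
  "Nstar_dir \<theta> = {t. 1 \<le> t \<and> (\<forall>i. real t * \<theta> $ i \<in> \<int>)
                      \<and> (\<exists>n::nat. real t - real t * l1norm \<theta> = 2 * real n)}"

text \<open>The lattice point n*theta (meaningful when n*theta is integral).\<close>
definition lattice_pt :: "real^'d \<Rightarrow> nat \<Rightarrow> int^'d" where
  "lattice_pt \<theta> n = (\<chi> i. \<lfloor>real n * \<theta> $ i\<rfloor>)"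

definition genea :: "nat \<Rightarrow> nat list set" where
  "genea t = {\<nu>. length \<nu> = t + 1 \<and> \<nu> ! 0 = 1 \<and> (\<forall>i<length \<nu>. 1 \<le> \<nu> ! i)}"

definition all_genea :: "nat list set" where
  "all_genea = (\<Union>t. genea t)"

definition nbrs :: "int^'d \<Rightarrow> (int^'d) set" where
  "nbrs x = {x + axis i 1 | i. True} \<union> {x - axis i 1 | i. True}"

text \<open>A sample point: omega (t,x,nu) = (X_{t,x,nu}, K_{t,x,nu}).\<close>
type_synonym 'd config = "nat \<times> (int^'d) \<times> nat list \<Rightarrow> (int^'d) \<times> nat"

definition Pq :: "(nat \<times> (int^'d) \<Rightarrow> nat pmf) \<Rightarrow> 'd config measure" where
  "Pq q = (\<Pi>\<^sub>M i\<in>UNIV \<times> UNIV \<times> all_genea.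
             measure_pmf (pair_pmf (pmf_of_set (nbrs (fst (snd i)))) (q (fst i, fst (snd i)))))"

fun branch :: "'d config \<Rightarrow> nat \<Rightarrow> int^'d \<Rightarrow> nat list \<Rightarrow> nat \<Rightarrow> ((int^'d) \<times> nat list) set" where
  "branch \<omega> s z lam 0 = {(z, lam)}"
| "branch \<omega> s z lam (Suc t) =
     (\<Union>(x, \<nu>)\<in>branch \<omega> s z lam t.
        {(y, \<mu>). \<mu> \<in> genea (s + t + 1) \<and> fst (\<omega> (s + t, x, \<nu>)) = y
                 \<and> take (s + t + 1) \<mu> = \<nu> \<and> \<mu> ! (s + t + 1) \<le> snd (\<omega> (s + t, x, \<nu>))})"

definition Bstar_loc :: "'d config \<Rightarrow> real^'d \<Rightarrow> nat \<Rightarrow> nat \<Rightarrow> nat list \<Rightarrow> nat list set" where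
  "Bstar_loc \<omega> \<theta> T s lam =
     {\<nu> \<in> genea (s * T).
        (lattice_pt \<theta> (s * T), \<nu>) \<in> branch \<omega> ((s - 1) * T) (lattice_pt \<theta> ((s - 1) * T)) lam T}"

definition pmf_space :: "nat pmf measure" where
  "pmf_space = vimage_algebra UNIV (\<lambda>p k. pmf p k) (\<Pi>\<^sub>M k\<in>(UNIV::nat set). borel)"

definition env_space :: "(nat \<times> (int^'d) \<Rightarrow> nat pmf) measure" where
  "env_space = (\<Pi>\<^sub>M i\<in>UNIV. pmf_space)"

text \<open>q^*_s(k) = P^q(|B^*_{s,lambda}| = k), evaluated at the canonical lambda = (1,...,1).\<close>
definition qstar :: "(nat \<times> (int^'d) \<Rightarrow> nat pmf) \<Rightarrow> real^'d \<Rightarrow> nat \<Rightarrow> nat \<Rightarrow> nat \<Rightarrow> real" where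
  "qstar q \<theta> T s k =
     measure (Pq q) {\<omega> \<in> space (Pq q).
        card (Bstar_loc \<omega> \<theta> T s (replicate ((s - 1) * T + 1) 1)) = k}"

end

theory Submission
  imports Defs
begin

text \<open>
  The set B^*_{s,\<lambda>} is a function of the coordinates (u, x, \<nu>) of the configuration with
  (s - 1)T \<le> u < sT and \<nu> extending \<lambda>. For distinct \<lambda> these families of coordinates are
  disjoint, so under the product measure P^q the sets B^*_{s,\<lambda>} are independent. Exchanging the
  prefixes \<lambda> and \<lambda>' in all genealogies permutes the coordinates without changing their laws, and it
  carries B^*_{s,\<lambda>} to B^*_{s,\<lambda>'} up to that prefix; hence the identical distribution.

  Likewise q^*_s depends only on the environment in the time window [(s - 1)T, sT), and these
  windows are disjoint, which gives independence under Q. Translating space-time by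
  ((s - 1)T, (s - 1)T\<theta>) (an integer point because T\<theta> is integral) and relabelling genealogies
  transports P^q to P^{q'} for the shifted environment q' and q^*_s(q) to q^*_1(q'); since Q is an
  i.i.d. product, q' has the same law as q.
\<close>

lemma genea_append_iff:
  assumes "\<nu> \<in> genea n"
  shows "\<nu> @ [m] \<in> genea (Suc n) \<longleftrightarrow> 1 \<le> m"
  using assms by (auto simp: genea_def nth_append less_Suc_eq)

lemma genea_SucD:
  assumes "\<mu> \<in> genea (Suc n)"
  shows "\<mu> = take (Suc n) \<mu> @ [\<mu> ! Suc n]" "take (Suc n) \<mu> \<in> genea n" "1 \<le> \<mu> ! Suc n"
proof -
  have len: "length \<mu> = Suc (Suc n)" using assms by (simp add: genea_def)
  show "\<mu> = take (Suc n) \<mu> @ [\<mu> ! Suc n]"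
    using take_Suc_conv_app_nth[of "Suc n" \<mu>] len by simp
  show "take (Suc n) \<mu> \<in> genea n" "1 \<le> \<mu> ! Suc n"
    using assms by (auto simp: genea_def)
qed

lemma genea_imp_all_genea: "\<nu> \<in> genea t \<Longrightarrow> \<nu> \<in> all_genea"
  by (auto simp: all_genea_def)

lemma genea_Cons_drop: "\<nu> \<in> genea t \<Longrightarrow> \<nu> = 1 # drop 1 \<nu>"
  by (cases \<nu>) (auto simp: genea_def)

lemma genea_append_drop:
  assumes "lam \<in> genea (s + a)" "\<nu> \<in> genea (s + t)"
  shows "lam @ drop (s + 1) \<nu> \<in> genea (s + a + t)"
  using assms by (auto simp: genea_def nth_append)

lemma replicate_genea: "replicate (m + 1) 1 \<in> genea m"
  by (simp add: genea_def del: replicate.simps)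

definition branch_step :: "'d config \<Rightarrow> nat \<Rightarrow> (int^'d) \<times> nat list \<Rightarrow> ((int^'d) \<times> nat list) set" where
  "branch_step \<omega> n p = {(y, \<mu>). \<mu> \<in> genea (n + 1) \<and> fst (\<omega> (n, fst p, snd p)) = y
                 \<and> take (n + 1) \<mu> = snd p \<and> \<mu> ! (n + 1) \<le> snd (\<omega> (n, fst p, snd p))}"

lemma branch_Suc_step: "branch \<omega> s z lam (Suc t) = (\<Union>p\<in>branch \<omega> s z lam t. branch_step \<omega> (s + t) p)"
  by (auto simp: branch_step_def)

declare branch.simps(2)[simp del]

lemma branch_step_eq_image:
  assumes "\<nu> \<in> genea n"
  shows "branch_step \<omega> n (x, \<nu>) = (\<lambda>m. (fst (\<omega> (n, x, \<nu>)), \<nu> @ [m])) ` {1..snd (\<omega> (n, x, \<nu>))}"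
proof (intro set_eqI iffI)
  fix q assume "q \<in> branch_step \<omega> n (x, \<nu>)"
  then obtain \<mu> where q: "q = (fst (\<omega> (n, x, \<nu>)), \<mu>)" and \<mu>: "\<mu> \<in> genea (Suc n)"
    and "take (Suc n) \<mu> = \<nu>" "\<mu> ! Suc n \<le> snd (\<omega> (n, x, \<nu>))"
    by (auto simp: branch_step_def)
  with genea_SucD[OF \<mu>] show "q \<in> (\<lambda>m. (fst (\<omega> (n, x, \<nu>)), \<nu> @ [m])) ` {1..snd (\<omega> (n, x, \<nu>))}"
    by (auto intro!: image_eqI[where x="\<mu> ! Suc n"])
next
  fix q assume "q \<in> (\<lambda>m. (fst (\<omega> (n, x, \<nu>)), \<nu> @ [m])) ` {1..snd (\<omega> (n, x, \<nu>))}"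
  then obtain m where "q = (fst (\<omega> (n, x, \<nu>)), \<nu> @ [m])" "1 \<le> m" "m \<le> snd (\<omega> (n, x, \<nu>))"
    by auto
  moreover have "length \<nu> = n + 1" using assms by (simp add: genea_def)
  ultimately show "q \<in> branch_step \<omega> n (x, \<nu>)"
    using genea_append_iff[OF assms] by (simp add: branch_step_def nth_append)
qed

lemma branch_step_eq_empty: "\<nu> \<notin> genea n \<Longrightarrow> branch_step \<omega> n (x, \<nu>) = {}"
  by (auto simp: branch_step_def dest: genea_SucD(2))

lemma branch_genea:
  assumes lam: "lam \<in> genea s" and p: "p \<in> branch \<omega> s z lam t"
  shows "snd p \<in> genea (s + t) \<and> take (s + 1) (snd p) = lam"
  using p
proof (induction t arbitrary: p)
  case 0
  then show ?case using lam by (auto simp: genea_def)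
next
  case (Suc t)
  then obtain x \<nu> where p': "(x, \<nu>) \<in> branch \<omega> s z lam t" "p \<in> branch_step \<omega> (s + t) (x, \<nu>)"
    by (auto simp: branch_Suc_step)
  with Suc.IH have \<nu>: "\<nu> \<in> genea (s + t)" "take (s + 1) \<nu> = lam" by auto
  from p'(2) obtain m where "p = (fst (\<omega> (s + t, x, \<nu>)), \<nu> @ [m])" "1 \<le> m"
    unfolding branch_step_eq_image[OF \<nu>(1)] by auto
  moreover have "length \<nu> = s + t + 1" using \<nu>(1) by (simp add: genea_def)
  ultimately show ?case using \<nu> genea_append_iff[OF \<nu>(1)] by auto
qed

lemma branch_cong_local:
  assumes lam: "lam \<in> genea s"
    and agree: "\<And>u x \<nu>. s \<le> u \<Longrightarrow> u < s + t \<Longrightarrow> \<nu> \<in> genea u \<Longrightarrow> take (s + 1) \<nu> = lam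
      \<Longrightarrow> \<omega> (u, x, \<nu>) = \<omega>' (u, x, \<nu>)"
  shows "branch \<omega> s z lam t = branch \<omega>' s z lam t"
  using agree
proof (induction t)
  case 0 then show ?case by simp
next
  case (Suc t)
  have "branch_step \<omega> (s + t) p = branch_step \<omega>' (s + t) p" if "p \<in> branch \<omega> s z lam t" for p
    using branch_genea[OF lam that] Suc.prems[of "s + t" "snd p" "fst p"] by (simp add: branch_step_def)
  with Suc show ?case by (simp add: branch_Suc_step)
qed

lemma branch_relabel:
  assumes lam: "lam \<in> genea s" and lam': "lam' \<in> genea (s + a)"
    and relabel: "\<And>u x \<nu>. s \<le> u \<Longrightarrow> \<nu> \<in> genea u \<Longrightarrow> take (s + 1) \<nu> = lam \<Longrightarrow>
       \<omega>' (u, x, \<nu>) = (fst (\<omega> (u + a, x + z, lam' @ drop (s + 1) \<nu>)) - z, snd (\<omega> (u + a, x + z, lam' @ drop (s + 1) \<nu>)))"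
  shows "branch \<omega> (s + a) (w + z) lam' t = (\<lambda>(x, \<nu>). (x + z, lam' @ drop (s + 1) \<nu>)) ` branch \<omega>' s w lam t"
proof (induction t)
  case 0
  have "length lam = s + 1" using lam by (simp add: genea_def)
  then show ?case by simp
next
  case (Suc t)
  let ?g = "\<lambda>(x::int^'a, \<nu>::nat list). (x + z, lam' @ drop (s + 1) \<nu>)"
  have "branch_step \<omega> (s + a + t) (?g p) = ?g ` branch_step \<omega>' (s + t) p" if p: "p \<in> branch \<omega>' s w lam t" for p
  proof -
    obtain x \<nu> where pp: "p = (x, \<nu>)" by (cases p)
    have \<nu>: "\<nu> \<in> genea (s + t)" "take (s + 1) \<nu> = lam" using branch_genea[OF lam p] pp by auto
    have len: "length \<nu> = s + t + 1" using \<nu> by (simp add: genea_def)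
    define \<nu>' where "\<nu>' = lam' @ drop (s + 1) \<nu>"
    have \<nu>': "\<nu>' \<in> genea (s + a + t)" unfolding \<nu>'_def by (rule genea_append_drop[OF lam' \<nu>(1)])
    have \<omega>': "\<omega>' (s + t, x, \<nu>) = (fst (\<omega> (s + a + t, x + z, \<nu>')) - z, snd (\<omega> (s + a + t, x + z, \<nu>')))"
      using relabel[of "s + t" \<nu> x] \<nu> unfolding \<nu>'_def by (simp add: add_ac)
    have "branch_step \<omega> (s + a + t) (x + z, \<nu>') = ?g ` branch_step \<omega>' (s + t) (x, \<nu>)"
      unfolding branch_step_eq_image[OF \<nu>(1)] branch_step_eq_image[OF \<nu>'] \<omega>'
      by (simp add: image_image \<nu>'_def len)
    then show ?thesis unfolding pp \<nu>'_def by simp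
  qed
  then have "(\<Union>p\<in>branch \<omega>' s w lam t. branch_step \<omega> (s + a + t) (?g p))
      = (\<Union>p\<in>branch \<omega>' s w lam t. ?g ` branch_step \<omega>' (s + t) p)"
    by (intro SUP_cong) auto
  then show ?case
    unfolding branch_Suc_step Suc.IH by (simp add: image_UN)
qed

lemma Bstar_loc_eq:
  assumes s: "1 \<le> s" and lam: "lam \<in> genea ((s - 1) * T)"
  shows "Bstar_loc \<omega> \<theta> T s lam =
    {\<nu>. (lattice_pt \<theta> (s * T), \<nu>) \<in> branch \<omega> ((s - 1) * T) (lattice_pt \<theta> ((s - 1) * T)) lam T}"
proof -
  have "s * T = (s - 1) * T + T" using s by (cases s) auto
  then show ?thesis unfolding Bstar_loc_def using branch_genea[OF lam] by fastforce
qed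

lemma Bstar_loc_restrict:
  assumes lam: "lam \<in> genea ((s - 1) * T)"
    and K: "\<And>u x \<nu>. (s - 1) * T \<le> u \<Longrightarrow> u < (s - 1) * T + T \<Longrightarrow> \<nu> \<in> genea u
      \<Longrightarrow> take ((s - 1) * T + 1) \<nu> = lam \<Longrightarrow> (u, x, \<nu>) \<in> K"
  shows "Bstar_loc (restrict \<omega> K) \<theta> T s lam = Bstar_loc \<omega> \<theta> T s lam"
  unfolding Bstar_loc_def by (subst branch_cong_local[OF lam, where \<omega>'=\<omega>]) (auto simp: K)

lemma measurable_component_total:
  assumes "\<And>j. j \<in> J \<Longrightarrow> sets (M j) = sets N" and "space N = UNIV"
  shows "(\<lambda>\<omega>. \<omega> i) \<in> measurable (PiM J M) N"
proof (cases "i \<in> J")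
  case True
  then have "(\<lambda>\<omega>. \<omega> i) \<in> measurable (PiM J M) (M i)" by (rule measurable_component_singleton)
  moreover have "measurable (PiM J M) (M i) = measurable (PiM J M) N"
    by (rule measurable_cong_sets) (simp_all add: assms(1)[OF True])
  ultimately show ?thesis by simp
next
  case False
  then have "\<omega> i = undefined" if "\<omega> \<in> space (PiM J M)" for \<omega>
    using that by (auto simp: space_PiM PiE_def extensional_def)
  then show ?thesis
    by (subst measurable_cong[where g="\<lambda>_. undefined"]) (auto simp: assms(2))
qed

lemma measurable_Un_finite:
  fixes f g :: "'a \<Rightarrow> 'b::countable set"
  assumes f: "f \<in> measurable M (count_space (Collect finite))"
    and g: "g \<in> measurable M (count_space (Collect finite))"
  shows "(\<lambda>x. f x \<union> g x) \<in> measurable M (count_space (Collect finite))"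
proof (rule measurable_compose_countable'[where f="\<lambda>a x. a \<union> g x", OF _ f countable_Collect_finite])
  fix a :: "'b set" assume "a \<in> Collect finite"
  then have "(\<lambda>b. a \<union> b) \<in> measurable (count_space (Collect finite)) (count_space (Collect finite))"
    by auto
  from measurable_compose[OF g this] show "(\<lambda>x. a \<union> g x) \<in> measurable M (count_space (Collect finite))" .
qed

lemma measurable_branch_step:
  assumes M: "\<And>i. i \<in> J \<Longrightarrow> sets (M i) = UNIV"
  shows "(\<lambda>\<omega>. branch_step \<omega> n p) \<in> measurable (PiM J M) (count_space (Collect finite))"
proof -
  obtain x \<nu> where p: "p = (x, \<nu>)" by (cases p)
  show ?thesis
  proof (cases "\<nu> \<in> genea n")
    case True
    have "(\<lambda>\<omega>. \<omega> (n, x, \<nu>)) \<in> measurable (PiM J M) (count_space UNIV)"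
      by (rule measurable_component_total) (simp_all add: M)
    moreover have "(\<lambda>v. (\<lambda>m. (fst v, \<nu> @ [m])) ` {1..snd v}) \<in> measurable (count_space UNIV) (count_space (Collect finite))"
      by auto
    ultimately show ?thesis unfolding p branch_step_eq_image[OF True] by (rule measurable_compose)
  next
    case False
    then show ?thesis unfolding p branch_step_eq_empty[OF False] by simp
  qed
qed

lemma measurable_UN_branch_step:
  assumes M: "\<And>i. i \<in> J \<Longrightarrow> sets (M i) = UNIV" and P: "finite P"
  shows "(\<lambda>\<omega>. \<Union>p\<in>P. branch_step \<omega> n p) \<in> measurable (PiM J M) (count_space (Collect finite))"
  using P by induction (simp_all add: measurable_Un_finite measurable_branch_step[OF M])

lemma measurable_branch:
  assumes M: "\<And>i. i \<in> J \<Longrightarrow> sets (M i) = UNIV"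
  shows "(\<lambda>\<omega>. branch \<omega> s z lam t) \<in> measurable (PiM J M) (count_space (Collect finite))"
proof (induction t)
  case 0 then show ?case by simp
next
  case (Suc t)
  have "(\<lambda>\<omega>. (\<lambda>P \<omega>. \<Union>p\<in>P. branch_step \<omega> (s + t) p) (branch \<omega> s z lam t) \<omega>)
      \<in> measurable (PiM J M) (count_space (Collect finite))"
    by (rule measurable_compose_countable'[OF measurable_UN_branch_step[OF M] Suc countable_Collect_finite]) auto
  then show ?case by (simp add: branch_Suc_step)
qed

lemma measurable_Bstar_loc:
  assumes M: "\<And>i. i \<in> J \<Longrightarrow> sets (M i) = UNIV"
  shows "(\<lambda>\<omega>. Bstar_loc \<omega> \<theta> T s lam) \<in> measurable (PiM J M) (count_space UNIV)"
proof -
  have "(\<lambda>B. {\<nu> \<in> genea (s * T). (lattice_pt \<theta> (s * T), \<nu>) \<in> B})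
      \<in> measurable (count_space (Collect finite)) (count_space UNIV)"
    by simp
  from measurable_compose[OF measurable_branch[OF M] this] show ?thesis unfolding Bstar_loc_def .
qed

definition Pq_index :: "(nat \<times> (int^'d) \<times> nat list) set" where
  "Pq_index = UNIV \<times> UNIV \<times> all_genea"

definition Pq_factor :: "(nat \<times> (int^'d) \<Rightarrow> nat pmf) \<Rightarrow> nat \<times> (int^'d) \<times> nat list \<Rightarrow> ((int^'d) \<times> nat) measure" where
  "Pq_factor q i = measure_pmf (pair_pmf (pmf_of_set (nbrs (fst (snd i)))) (q (fst i, fst (snd i))))"

lemma Pq_eq_PiM: "Pq q = PiM Pq_index (Pq_factor q)"
  unfolding Pq_def Pq_index_def Pq_factor_def by simp

lemma sets_Pq_factor[simp]: "sets (Pq_factor q i) = UNIV"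
  by (simp add: Pq_factor_def)

lemma space_Pq_factor[simp]: "space (Pq_factor q i) = UNIV"
  by (simp add: Pq_factor_def)

lemma prob_space_Pq_factor: "prob_space (Pq_factor q i)"
  by (simp add: Pq_factor_def prob_space_measure_pmf)

lemma prob_space_Pq: "prob_space (Pq q)"
  unfolding Pq_eq_PiM by (rule prob_space_PiM) (rule prob_space_Pq_factor)

lemma space_Pq: "space (Pq q) = space (PiM Pq_index (\<lambda>_. count_space UNIV))"
  by (simp add: Pq_eq_PiM space_PiM Pq_factor_def)

lemma indep_vars_PiM_components:
  assumes M: "\<And>i. i \<in> I \<Longrightarrow> prob_space (M i)"
  shows "prob_space.indep_vars (PiM I M) M (\<lambda>i \<omega>. \<omega> i) I"
proof -
  interpret prob_space "PiM I M" by (rule prob_space_PiM) (rule M)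
  show ?thesis
  proof (cases "I = {}")
    case True then show ?thesis unfolding indep_vars_def indep_sets_def by simp
  next
    case False
    have "distr (PiM I M) (PiM I M) (\<lambda>\<omega>. \<lambda>i\<in>I. \<omega> i) = distr (PiM I M) (PiM I M) (\<lambda>\<omega>. \<omega>)"
      by (rule distr_cong) (auto simp: space_PiM)
    also have "\<dots> = PiM I (\<lambda>i. distr (PiM I M) (M i) (\<lambda>\<omega>. \<omega> i))"
      by (auto simp: distr_id2 distr_PiM_component M intro!: PiM_cong)
    finally show ?thesis
      by (subst indep_vars_iff_distr_eq_PiM'[OF False]) (simp_all add: measurable_component_singleton)
  qed
qed

lemma measurable_PiM_reindex:
  assumes "f \<in> I \<rightarrow> K"
  shows "(\<lambda>\<omega>. \<lambda>i\<in>I. \<omega> (f i)) \<in> measurable (PiM K M) (PiM I (\<lambda>i. M (f i)))"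
  using assms by (intro measurable_restrict measurable_component_singleton) auto

section \<open>Independence and exchangeability of the sets B^*_{s,\<lambda>}\<close>

lemma Bstar_loc_indep:
  fixes q :: "nat \<times> (int^'d) \<Rightarrow> nat pmf"
  shows "prob_space.indep_vars (Pq q) (\<lambda>_. count_space UNIV)
          (\<lambda>lam \<omega>. Bstar_loc \<omega> \<theta> T s lam) (genea ((s - 1) * T))"
proof -
  interpret P: prob_space "Pq q" by (rule prob_space_Pq)
  define K where "K lam = {i \<in> (Pq_index :: (nat \<times> (int^'d) \<times> nat list) set). take ((s - 1) * T + 1) (snd (snd i)) = lam}" for lam
  have "P.indep_vars (Pq_factor q) (\<lambda>i \<omega>. \<omega> i) Pq_index"
    unfolding Pq_eq_PiM by (rule indep_vars_PiM_components) (rule prob_space_Pq_factor)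
  then have "P.indep_vars (\<lambda>lam. PiM (K lam) (Pq_factor q)) (\<lambda>lam \<omega>. restrict \<omega> (K lam)) (genea ((s - 1) * T))"
    by (rule P.indep_vars_restrict) (auto simp: K_def disjoint_family_on_def)
  then have "P.indep_vars (\<lambda>_. count_space UNIV)
     (\<lambda>lam \<omega>. Bstar_loc (restrict \<omega> (K lam)) \<theta> T s lam) (genea ((s - 1) * T))"
    by (rule P.indep_vars_compose2) (rule measurable_Bstar_loc, simp)
  moreover have "Bstar_loc (restrict \<omega> (K lam)) \<theta> T s lam = Bstar_loc \<omega> \<theta> T s lam"
    if "lam \<in> genea ((s - 1) * T)" for lam \<omega>
    using that by (intro Bstar_loc_restrict) (auto simp: K_def Pq_index_def genea_imp_all_genea)
  ultimately show ?thesis by (simp cong: P.indep_vars_cong)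
qed

definition swap_prefix :: "nat list \<Rightarrow> nat list \<Rightarrow> nat list \<Rightarrow> nat list" where
  "swap_prefix lam lam' \<nu> =
     (if take (length lam') \<nu> = lam' then lam @ drop (length lam') \<nu>
      else if take (length lam) \<nu> = lam then lam' @ drop (length lam) \<nu> else \<nu>)"

lemma swap_prefix_swap_prefix:
  assumes "length lam = length lam'"
  shows "swap_prefix lam lam' (swap_prefix lam lam' \<nu>) = \<nu>"
  using assms by (auto simp: swap_prefix_def) (metis append_take_drop_id)+

lemma swap_prefix_genea:
  assumes lam: "lam \<in> genea m" and lam': "lam' \<in> genea m" and \<nu>: "\<nu> \<in> genea t"
  shows "swap_prefix lam lam' \<nu> \<in> genea t"
proof -
  have replace: "pre @ drop (m + 1) \<nu> \<in> genea t" if "pre \<in> genea m" "take (m + 1) \<nu> \<in> genea m" for pre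
  proof -
    have "t = m + (t - m)" using that(2) \<nu> by (auto simp: genea_def)
    then show ?thesis using genea_append_drop[of pre m 0 \<nu> "t - m"] that(1) \<nu> by simp
  qed
  have "length lam = m + 1" "length lam' = m + 1" using lam lam' by (auto simp: genea_def)
  then show ?thesis unfolding swap_prefix_def using replace lam lam' \<nu> by auto
qed

lemma Bstar_loc_drop_distr_eq:
  fixes q :: "nat \<times> (int^'d) \<Rightarrow> nat pmf"
  assumes s: "1 \<le> s" and lam: "lam \<in> genea ((s - 1) * T)" and lam': "lam' \<in> genea ((s - 1) * T)"
  shows "distr (Pq q) (count_space UNIV) (\<lambda>\<omega>. drop ((s - 1) * T + 1) ` Bstar_loc \<omega> \<theta> T s lam)
       = distr (Pq q) (count_space UNIV) (\<lambda>\<omega>. drop ((s - 1) * T + 1) ` Bstar_loc \<omega> \<theta> T s lam')"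
proof -
  define m where "m = (s - 1) * T"
  have len: "length lam = m + 1" "length lam' = m + 1" using lam lam' by (auto simp: genea_def m_def)
  define \<phi> :: "nat \<times> (int^'d) \<times> nat list \<Rightarrow> _" where "\<phi> i = (fst i, fst (snd i), swap_prefix lam lam' (snd (snd i)))" for i
  define R where "R \<omega> = (\<lambda>i\<in>Pq_index. \<omega> (\<phi> i))" for \<omega> :: "'d config"
  define f where "f l \<omega> = drop (m + 1) ` Bstar_loc \<omega> \<theta> T s l" for l \<omega>
  have \<phi>: "\<phi> \<in> Pq_index \<rightarrow> Pq_index"
    using swap_prefix_genea[OF lam lam'] by (fastforce simp: \<phi>_def Pq_index_def all_genea_def)
  have inj: "inj_on \<phi> Pq_index"
    by (rule inj_on_inverseI[where g=\<phi>]) (auto simp: \<phi>_def swap_prefix_swap_prefix len)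
  have factor: "(\<lambda>i. Pq_factor q (\<phi> i)) = Pq_factor q"
    by (auto simp: Pq_factor_def \<phi>_def)
  have R_distr: "distr (Pq q) (Pq q) R = Pq q"
    using distr_PiM_reindex[of Pq_index "Pq_factor q", OF prob_space_Pq_factor inj \<phi>] unfolding Pq_eq_PiM R_def factor .
  have R_meas: "R \<in> measurable (Pq q) (Pq q)"
    using measurable_PiM_reindex[OF \<phi>, of "Pq_factor q"] unfolding Pq_eq_PiM R_def factor .
  have f_meas: "f l \<in> measurable (Pq q) (count_space UNIV)" for l
    unfolding f_def Pq_eq_PiM by (rule measurable_compose[OF measurable_Bstar_loc]) simp_all
  have swap: "f lam' (R \<omega>) = f lam \<omega>" for \<omega>
  proof -
    have "branch \<omega> (m + 0) (w + 0) lam T = (\<lambda>(x, \<nu>). (x + 0, lam @ drop (m + 1) \<nu>)) ` branch (R \<omega>) m w lam' T" for w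
      by (rule branch_relabel) (use lam lam' len in \<open>auto simp: m_def R_def \<phi>_def swap_prefix_def Pq_index_def genea_imp_all_genea\<close>)
    then have "{\<nu>. (p, \<nu>) \<in> branch \<omega> m w lam T} = (\<lambda>\<nu>. lam @ drop (m + 1) \<nu>) ` {\<nu>. (p, \<nu>) \<in> branch (R \<omega>) m w lam' T}" for p w
      by (auto simp: image_iff) (metis (no_types, lifting) case_prod_conv)
    then show ?thesis
      unfolding f_def Bstar_loc_eq[OF s lam] Bstar_loc_eq[OF s lam'] m_def[symmetric]
      by (simp add: image_image len)
  qed
  have "distr (Pq q) (count_space UNIV) (f lam) = distr (Pq q) (count_space UNIV) (f lam' \<circ> R)"
    by (rule distr_cong) (auto simp: swap)
  also have "\<dots> = distr (distr (Pq q) (Pq q) R) (count_space UNIV) (f lam')"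
    by (rule distr_distr[symmetric, OF f_meas R_meas])
  also have "\<dots> = distr (Pq q) (count_space UNIV) (f lam')" by (simp only: R_distr)
  finally show ?thesis unfolding f_def m_def .
qed

section \<open>Measurability of the quenched probabilities in the environment\<close>

lemma measurable_pmf_pmf_space[measurable]: "(\<lambda>p. pmf p k) \<in> borel_measurable pmf_space"
proof -
  have "(\<lambda>p k. pmf p k) \<in> measurable pmf_space (\<Pi>\<^sub>M k\<in>(UNIV::nat set). borel)"
    unfolding pmf_space_def by (rule measurable_vimage_algebra1) (simp add: space_PiM)
  from measurable_component_singleton'[OF this measurable_ident, of k] show ?thesis by simp
qed

lemma space_pmf_space[simp]: "space pmf_space = UNIV"
  by (simp add: pmf_space_def)

lemma finite_nbrs: "finite (nbrs x)"
proof -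
  have "nbrs x = range (\<lambda>i. x + axis i 1) \<union> range (\<lambda>i. x - axis i 1)"
    unfolding nbrs_def by auto
  then show ?thesis by simp
qed

lemma nbrs_nonempty: "nbrs x \<noteq> {}"
  unfolding nbrs_def by auto

lemma measurable_emeasure_pair_pmf_of_set:
  assumes N: "finite N" "N \<noteq> {}"
  shows "(\<lambda>p. emeasure (measure_pmf (pair_pmf (pmf_of_set N) p)) X) \<in> borel_measurable pmf_space"
proof -
  have "emeasure (measure_pmf (pair_pmf (pmf_of_set N) p)) X
      = (\<Sum>a\<in>N. \<Sum>b. ennreal (pmf p b) * indicator X (a, b)) / of_nat (card N)" for p
  proof -
    have "emeasure (measure_pmf (pair_pmf (pmf_of_set N) p)) X
        = (\<integral>\<^sup>+a. \<integral>\<^sup>+b. indicator X (a, b) \<partial>measure_pmf p \<partial>measure_pmf (pmf_of_set N))"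
      using nn_integral_pair_pmf'[of "pmf_of_set N" p "indicator X"] by simp
    also have "\<dots> = (\<Sum>a\<in>N. \<integral>\<^sup>+b. indicator X (a, b) \<partial>measure_pmf p) / of_nat (card N)"
      using N by (subst nn_integral_pmf_of_set) auto
    also have "\<dots> = (\<Sum>a\<in>N. \<Sum>b. ennreal (pmf p b) * indicator X (a, b)) / of_nat (card N)"
      by (simp add: nn_integral_measure_pmf nn_integral_count_space_nat)
    finally show ?thesis .
  qed
  then show ?thesis by simp
qed

lemma measurable_emeasure_Pq_factor:
  assumes "(\<lambda>r. r tx) \<in> measurable N pmf_space"
  shows "(\<lambda>r. emeasure (Pq_factor r (fst tx, snd tx, \<nu>)) X) \<in> borel_measurable N"
  using measurable_compose[OF assms measurable_emeasure_pair_pmf_of_set[OF finite_nbrs nbrs_nonempty]]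
  by (simp add: Pq_factor_def)

lemma measurable_emeasure_Pq_prod_emb:
  fixes X :: "nat \<times> (int^'d) \<times> nat list \<Rightarrow> ((int^'d) \<times> nat) set"
  assumes q: "\<And>tx. (\<lambda>r. r tx) \<in> measurable N pmf_space"
    and J: "finite J" "J \<subseteq> Pq_index"
  shows "(\<lambda>r. emeasure (Pq r) (prod_emb Pq_index (\<lambda>_. count_space UNIV) J (Pi\<^sub>E J X))) \<in> borel_measurable N"
proof -
  have "emeasure (Pq r) (prod_emb Pq_index (\<lambda>_. count_space UNIV) J (Pi\<^sub>E J X))
      = (\<Prod>j\<in>J. emeasure (Pq_factor r j) (X j))" for r
  proof -
    have "prod_emb Pq_index (\<lambda>_. count_space UNIV) J (Pi\<^sub>E J X) = prod_emb Pq_index (Pq_factor r) J (Pi\<^sub>E J X)"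
      by (simp add: prod_emb_def Pq_factor_def)
    then show ?thesis unfolding Pq_eq_PiM using J by (simp add: emeasure_PiM_emb prob_space_Pq_factor)
  qed
  moreover have "(\<lambda>r. emeasure (Pq_factor r j) (X j)) \<in> borel_measurable N" for j :: "nat \<times> (int^'d) \<times> nat list"
    using measurable_emeasure_Pq_factor[OF q[of "(fst j, fst (snd j))"], of "snd (snd j)" "X j"] by simp
  ultimately show ?thesis by simp
qed

text \<open>The map r \<mapsto> P^r is a measurable kernel: by a Dynkin argument it suffices to check
  cylinder sets, whose probabilities are finite products.\<close>

lemma measurable_emeasure_Pq:
  assumes q: "\<And>tx. (\<lambda>r. r tx) \<in> measurable N pmf_space"
    and E: "E \<in> sets (PiM (Pq_index :: (nat \<times> (int^'d) \<times> nat list) set) (\<lambda>_. count_space UNIV))"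
  shows "(\<lambda>r. emeasure (Pq r) E) \<in> borel_measurable N"
proof -
  let ?C = "\<lambda>_::nat \<times> (int^'d) \<times> nat list. count_space (UNIV :: ((int^'d) \<times> nat) set)"
  have sets_Pq: "sets (Pq r) = sets (PiM Pq_index ?C)" for r
    unfolding Pq_eq_PiM by (rule sets_PiM_cong) auto
  from E have "E \<in> sigma_sets (\<Pi>\<^sub>E i\<in>Pq_index. space (?C i)) (prod_algebra Pq_index ?C)"
    by (simp add: sets_PiM)
  with Int_stable_prod_algebra prod_algebra_sets_into_space show ?thesis
  proof (induction rule: sigma_sets_induct_disjoint)
    case (basic A)
    then show ?case
      by (auto elim!: prod_algebraE intro: measurable_emeasure_Pq_prod_emb[OF q])
  next
    case empty then show ?case by simp
  next
    case (compl A)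
    have "emeasure (Pq r) ((\<Pi>\<^sub>E i\<in>Pq_index. space (?C i)) - A) = 1 - emeasure (Pq r) A" for r
    proof -
      interpret prob_space "Pq r" by (rule prob_space_Pq)
      have "A \<in> sets (Pq r)" using compl(1) by (simp add: sets_Pq sets_PiM)
      from emeasure_compl[OF this] show ?thesis using emeasure_space_1 by (simp add: space_Pq space_PiM)
    qed
    then show ?case using compl(2) by simp
  next
    case (union A)
    have "emeasure (Pq r) (\<Union>i. A i) = (\<Sum>i. emeasure (Pq r) (A i))" for r
      using union(1,2) by (intro suminf_emeasure[symmetric]) (auto simp: sets_Pq sets_PiM)
    then show ?case using union(3) by simp
  qed
qed

definition Bstar_card_event :: "real^'d \<Rightarrow> nat \<Rightarrow> nat \<Rightarrow> nat \<Rightarrow> 'd config set" where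
  "Bstar_card_event \<theta> T s k = {\<omega> \<in> space (PiM Pq_index (\<lambda>_. count_space UNIV)).
     card (Bstar_loc \<omega> \<theta> T s (replicate ((s - 1) * T + 1) 1)) = k}"

lemma sets_Bstar_card_event:
  assumes M: "\<And>i. i \<in> J \<Longrightarrow> sets (M i) = UNIV"
  shows "{\<omega> \<in> space (PiM J M). card (Bstar_loc \<omega> \<theta> T s lam) = k} \<in> sets (PiM J M)"
proof -
  have "(\<lambda>\<omega>. card (Bstar_loc \<omega> \<theta> T s lam)) \<in> measurable (PiM J M) (count_space UNIV)"
    using measurable_compose[OF measurable_Bstar_loc[OF M], where g=card and L="count_space UNIV"] by simp
  from measurable_sets[OF this, of "{k}"] show ?thesis by (simp add: vimage_def Int_def conj_commute)
qed

lemma qstar_eq_measure: "qstar q \<theta> T s k = measure (Pq q) (Bstar_card_event \<theta> T s k)"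
  unfolding qstar_def Bstar_card_event_def space_Pq ..

lemma measurable_qstar:
  assumes q: "\<And>tx. (\<lambda>r. r tx) \<in> measurable N pmf_space"
  shows "(\<lambda>r. qstar r \<theta> T s) \<in> measurable N (\<Pi>\<^sub>M k\<in>(UNIV::nat set). borel)"
proof (rule measurable_PiM_single')
  fix k
  have "(\<lambda>r. emeasure (Pq r) (Bstar_card_event \<theta> T s k)) \<in> borel_measurable N"
    unfolding Bstar_card_event_def by (intro measurable_emeasure_Pq[OF q] sets_Bstar_card_event) simp
  then show "(\<lambda>r. qstar r \<theta> T s k) \<in> borel_measurable N"
    unfolding qstar_eq_measure measure_def by (rule borel_measurable_enn2real)
qed (simp add: space_PiM)

section \<open>Independence and stationarity of q^*_s\<close>

lemma qstar_local:
  fixes q q' :: "nat \<times> (int^'d) \<Rightarrow> nat pmf"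
  assumes agree: "\<And>t x. (s - 1) * T \<le> t \<Longrightarrow> t < (s - 1) * T + T \<Longrightarrow> q (t, x) = q' (t, x)"
  shows "qstar q \<theta> T s = qstar q' \<theta> T s"
proof
  fix k
  define lam where "lam = (replicate ((s - 1) * T + 1) 1 :: nat list)"
  define W where "W = {i \<in> (Pq_index :: (nat \<times> (int^'d) \<times> nat list) set). (s - 1) * T \<le> fst i \<and> fst i < (s - 1) * T + T}"
  define E where "E = {\<omega> \<in> space (PiM W (\<lambda>_. count_space UNIV)). card (Bstar_loc \<omega> \<theta> T s lam) = k}"
  have window: "qstar r \<theta> T s k = measure (PiM W (Pq_factor r)) E" for r
  proof -
    have E: "E \<in> sets (PiM W (Pq_factor r))"
      using sets_Bstar_card_event[of W "Pq_factor r"] by (simp add: E_def space_PiM)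
    have d: "distr (Pq r) (PiM W (Pq_factor r)) (\<lambda>\<omega>. restrict \<omega> W) = PiM W (Pq_factor r)"
      using distr_PiM_reindex[of Pq_index "Pq_factor r" id W, OF prob_space_Pq_factor]
      unfolding Pq_eq_PiM by (simp add: W_def restrict_def)
    have m: "(\<lambda>\<omega>. restrict \<omega> W) \<in> measurable (Pq r) (PiM W (Pq_factor r))"
      unfolding Pq_eq_PiM by (rule measurable_restrict_subset) (auto simp: W_def)
    have "Bstar_loc (restrict \<omega> W) \<theta> T s lam = Bstar_loc \<omega> \<theta> T s lam" for \<omega>
      unfolding lam_def by (rule Bstar_loc_restrict[OF replicate_genea]) (auto simp: W_def Pq_index_def genea_imp_all_genea)
    then have "(\<lambda>\<omega>. restrict \<omega> W) -` E \<inter> space (Pq r) = Bstar_card_event \<theta> T s k"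
      unfolding E_def Bstar_card_event_def lam_def space_Pq by (auto simp: space_PiM)
    then show ?thesis unfolding qstar_eq_measure using measure_distr[OF m E] d by simp
  qed
  have "PiM W (Pq_factor q) = PiM W (Pq_factor q')"
    by (rule PiM_cong) (auto simp: W_def Pq_factor_def agree)
  then show "qstar q \<theta> T s k = qstar q' \<theta> T s k" unfolding window by simp
qed

lemma qstar_indep:
  fixes \<theta> :: "real^'d" and Q :: "(nat \<times> (int^'d) \<Rightarrow> nat pmf) measure"
  assumes Q: "prob_space Q"
    and Q_indep: "prob_space.indep_vars Q (\<lambda>_. pmf_space) (\<lambda>i q. q i) UNIV"
    and T: "1 \<le> T"
  shows "prob_space.indep_vars Q (\<lambda>_. \<Pi>\<^sub>M k\<in>(UNIV::nat set). borel) (\<lambda>s q. qstar q \<theta> T s) {1..}"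
proof -
  interpret Q: prob_space Q by (rule Q)
  define W where "W s = {tx :: nat \<times> (int^'d). (s - 1) * T \<le> fst tx \<and> fst tx < s * T}" for s
  have "W s \<inter> W s' = {}" if "s < s'" for s s'
  proof -
    have "s * T \<le> (s' - 1) * T" using that by (intro mult_le_mono1) auto
    moreover have "fst tx < s * T" "(s' - 1) * T \<le> fst tx" if "tx \<in> W s \<inter> W s'" for tx
      using that by (auto simp: W_def)
    ultimately show ?thesis by (meson equals0I leD order.strict_trans2)
  qed
  then have disj: "disjoint_family_on W {1..}"
    unfolding disjoint_family_on_def by (metis Int_commute nat_neq_iff)
  have "Q.indep_vars (\<lambda>s. PiM (W s) (\<lambda>_. pmf_space)) (\<lambda>s q. restrict q (W s)) {1..}"
    by (rule Q.indep_vars_restrict[OF Q_indep _ disj]) auto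
  then have "Q.indep_vars (\<lambda>_. \<Pi>\<^sub>M k\<in>(UNIV::nat set). borel) (\<lambda>s q. qstar (restrict q (W s)) \<theta> T s) {1..}"
    by (rule Q.indep_vars_compose2) (intro measurable_qstar measurable_component_total, simp_all add: pmf_space_def)
  moreover have "qstar (restrict q (W s)) \<theta> T s = qstar q \<theta> T s" if "1 \<le> s" for q s
  proof (rule qstar_local)
    fix t x assume "(s - 1) * T \<le> t" "t < (s - 1) * T + T"
    moreover have "(s - 1) * T + T = s * T" using \<open>1 \<le> s\<close> by (cases s) auto
    ultimately show "restrict q (W s) (t, x) = q (t, x)" by (simp add: W_def)
  qed
  ultimately show ?thesis
    by (subst Q.indep_vars_cong[OF refl _ refl, where Y="\<lambda>s q. qstar (restrict q (W s)) \<theta> T s"]) auto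
qed

lemma lattice_pt_add:
  assumes "\<forall>i. real T * \<theta> $ i \<in> \<int>"
  shows "lattice_pt \<theta> (m * T + T) = lattice_pt \<theta> (m * T) + lattice_pt \<theta> T"
proof -
  have "\<lfloor>real (m * T + T) * \<theta> $ i\<rfloor> = \<lfloor>real (m * T) * \<theta> $ i\<rfloor> + \<lfloor>real T * \<theta> $ i\<rfloor>" for i
  proof -
    obtain c where c: "real T * \<theta> $ i = of_int c" using assms by (meson Ints_cases)
    have a: "real (m * T + T) * \<theta> $ i = of_int ((int m + 1) * c)"
      and b: "real (m * T) * \<theta> $ i = of_int (int m * c)"
      by (simp_all add: algebra_simps c[symmetric])
    show ?thesis unfolding a b c by (simp add: algebra_simps)
  qed
  then show ?thesis by (simp add: lattice_pt_def vec_eq_iff)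
qed

lemma lattice_pt_0[simp]: "lattice_pt \<theta> 0 = 0"
  by (simp add: lattice_pt_def vec_eq_iff)

lemma nbrs_translate: "(\<lambda>y. y - z) ` nbrs (x + z) = nbrs x"
  unfolding nbrs_def by (auto simp: algebra_simps image_iff)

lemma distr_PiM_map_pmf:
  "distr (PiM I (\<lambda>i. measure_pmf (p i))) (PiM I (\<lambda>i. measure_pmf (map_pmf g (p i)))) (\<lambda>\<omega>. \<lambda>i\<in>I. g (\<omega> i))
     = PiM I (\<lambda>i. measure_pmf (map_pmf g (p i)))"
  (is "distr ?P ?Q ?g = ?Q")
proof (rule measure_eqI_PiM_infinite[symmetric, OF refl])
  show "sets (distr ?P ?Q ?g) = sets ?Q" by simp
  interpret prob_space ?Q by (rule prob_space_PiM) (simp add: prob_space_measure_pmf)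
  show "finite_measure ?Q" by unfold_locales
next
  fix A J assume J: "finite J" "J \<subseteq> I" and A: "\<And>i. i \<in> J \<Longrightarrow> A i \<in> sets (measure_pmf (map_pmf g (p i)))"
  have m: "?g \<in> measurable ?P ?Q"
    by (rule measurable_restrict) (rule measurable_compose[OF measurable_component_singleton], auto)
  have "?g -` prod_emb I (\<lambda>i. measure_pmf (map_pmf g (p i))) J (Pi\<^sub>E J A) \<inter> space ?P
      = prod_emb I (\<lambda>i. measure_pmf (p i)) J (Pi\<^sub>E J (\<lambda>j. g -` A j))"
    using J by (auto simp: prod_emb_def space_PiM PiE_def Pi_def extensional_def)
  then have "emeasure (distr ?P ?Q ?g) (prod_emb I (\<lambda>i. measure_pmf (map_pmf g (p i))) J (Pi\<^sub>E J A))
      = emeasure ?P (prod_emb I (\<lambda>i. measure_pmf (p i)) J (Pi\<^sub>E J (\<lambda>j. g -` A j)))"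
    using J A by (subst emeasure_distr[OF m]) (auto intro!: sets_PiM_I_finite measurable_prod_emb)
  also have "\<dots> = (\<Prod>j\<in>J. emeasure (measure_pmf (map_pmf g (p j))) (A j))"
    using J by (subst emeasure_PiM_emb) (auto simp: prob_space_measure_pmf map_pmf_rep_eq emeasure_distr)
  also have "\<dots> = emeasure ?Q (prod_emb I (\<lambda>i. measure_pmf (map_pmf g (p i))) J (Pi\<^sub>E J A))"
    using J A by (intro emeasure_PiM_emb[symmetric]) (auto simp: prob_space_measure_pmf)
  finally show "emeasure ?Q (prod_emb I (\<lambda>i. measure_pmf (map_pmf g (p i))) J (Pi\<^sub>E J A))
      = emeasure (distr ?P ?Q ?g) (prod_emb I (\<lambda>i. measure_pmf (map_pmf g (p i))) J (Pi\<^sub>E J A))"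
    by simp
qed

text \<open>The configuration seen from the space-time point (a, z) along the genealogy lam: the site
  (u, x, \<nu>) reads the site (u + a, x + z, lam @ tail of \<nu>), with the position translated back by z.\<close>

definition shift_index :: "nat \<Rightarrow> int^'d \<Rightarrow> nat list \<Rightarrow> nat \<times> (int^'d) \<times> nat list \<Rightarrow> nat \<times> (int^'d) \<times> nat list" where
  "shift_index a z lam i = (fst i + a, fst (snd i) + z, lam @ drop 1 (snd (snd i)))"

definition shift_config :: "nat \<Rightarrow> int^'d \<Rightarrow> nat list \<Rightarrow> 'd config \<Rightarrow> 'd config" where
  "shift_config a z lam \<omega> = (\<lambda>i\<in>Pq_index. (\<lambda>(y, k). (y - z, k)) (\<omega> (shift_index a z lam i)))"

lemma inj_on_shift_index:
  fixes z :: "int^'d"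
  shows "inj_on (shift_index a z lam) Pq_index"
proof (rule inj_onI)
  fix i j :: "nat \<times> (int^'d) \<times> nat list" assume "i \<in> Pq_index" "j \<in> Pq_index" "shift_index a z lam i = shift_index a z lam j"
  moreover have "\<nu> = 1 # drop 1 \<nu>" if "\<nu> \<in> all_genea" for \<nu>
    using that genea_Cons_drop by (auto simp: all_genea_def)
  ultimately show "i = j" by (auto simp: shift_index_def Pq_index_def prod_eq_iff) metis
qed

lemma shift_index_in_Pq_index:
  fixes z :: "int^'d"
  assumes "lam \<in> genea a"
  shows "shift_index a z lam \<in> Pq_index \<rightarrow> Pq_index"
proof
  fix i :: "nat \<times> (int^'d) \<times> nat list" assume "i \<in> Pq_index"
  then obtain t where "snd (snd i) \<in> genea (0 + t)" by (auto simp: Pq_index_def all_genea_def)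
  from genea_append_drop[of lam 0 a, OF _ this] assms show "shift_index a z lam i \<in> Pq_index"
    by (auto simp: shift_index_def Pq_index_def all_genea_def)
qed

lemma Pq_factor_translate:
  "Pq_factor (\<lambda>tx. q (fst tx + a, snd tx + z)) i
     = measure_pmf (map_pmf (\<lambda>(y, k). (y - z, k)) (pair_pmf (pmf_of_set (nbrs (fst (snd i) + z))) (q (fst i + a, fst (snd i) + z))))"
proof -
  have "map_pmf (\<lambda>(y, k). (y - z, k)) (pair_pmf (pmf_of_set (nbrs (fst (snd i) + z))) (q (fst i + a, fst (snd i) + z)))
      = pair_pmf (map_pmf (\<lambda>y. y - z) (pmf_of_set (nbrs (fst (snd i) + z)))) (map_pmf (\<lambda>k. k) (q (fst i + a, fst (snd i) + z)))"
    by (rule map_pair)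
  also have "\<dots> = pair_pmf (pmf_of_set (nbrs (fst (snd i)))) (q (fst i + a, fst (snd i) + z))"
    by (simp add: map_pmf_of_set_inj finite_nbrs nbrs_nonempty nbrs_translate inj_on_def)
  finally show ?thesis by (simp add: Pq_factor_def)
qed

lemma shift_config_distr:
  fixes q :: "nat \<times> (int^'d) \<Rightarrow> nat pmf" and z :: "int^'d"
  assumes lam: "lam \<in> genea a"
  defines "q' \<equiv> \<lambda>tx. q (fst tx + a, snd tx + z)"
  shows "shift_config a z lam \<in> measurable (Pq q) (Pq q')"
    and "distr (Pq q) (Pq q') (shift_config a z lam) = Pq q'"
proof -
  define tr where "tr = (\<lambda>(y::int^'d, k::nat). (y - z, k))"
  define P where "P i = pair_pmf (pmf_of_set (nbrs (fst (snd i) + z))) (q (fst i + a, fst (snd i) + z))"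
    for i :: "nat \<times> (int^'d) \<times> nat list"
  define R1 where "R1 \<omega> = (\<lambda>n\<in>Pq_index. \<omega> (shift_index a z lam n))" for \<omega> :: "'d config"
  define R2 where "R2 \<omega> = (\<lambda>i\<in>Pq_index. tr (\<omega> i))" for \<omega> :: "'d config"
  note f = shift_index_in_Pq_index[OF lam, of z]
  have factor: "Pq_factor q (shift_index a z lam i) = measure_pmf (P i)" for i
    by (simp add: Pq_factor_def shift_index_def P_def)
  have Pq': "Pq q' = PiM Pq_index (\<lambda>i. measure_pmf (map_pmf tr (P i)))"
    unfolding Pq_eq_PiM q'_def by (rule PiM_cong) (simp_all add: Pq_factor_translate P_def tr_def)
  have R1: "R1 \<in> measurable (Pq q) (PiM Pq_index (\<lambda>i. measure_pmf (P i)))"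
    using measurable_PiM_reindex[OF f, of "Pq_factor q"] unfolding Pq_eq_PiM R1_def factor .
  have R2: "R2 \<in> measurable (PiM Pq_index (\<lambda>i. measure_pmf (P i))) (Pq q')"
    unfolding Pq' R2_def
    by (rule measurable_restrict, rule measurable_compose[OF measurable_component_singleton]) auto
  have "shift_config a z lam = R2 \<circ> R1"
    by (auto simp: shift_config_def R1_def R2_def tr_def restrict_def fun_eq_iff)
  moreover have "distr (Pq q) (PiM Pq_index (\<lambda>i. measure_pmf (P i))) R1 = PiM Pq_index (\<lambda>i. measure_pmf (P i))"
    using distr_PiM_reindex[of Pq_index "Pq_factor q", OF prob_space_Pq_factor inj_on_shift_index f]
    unfolding Pq_eq_PiM R1_def factor .
  moreover have "distr (PiM Pq_index (\<lambda>i. measure_pmf (P i))) (Pq q') R2 = Pq q'"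
    unfolding Pq' R2_def by (rule distr_PiM_map_pmf)
  ultimately show "shift_config a z lam \<in> measurable (Pq q) (Pq q')"
    and "distr (Pq q) (Pq q') (shift_config a z lam) = Pq q'"
    using measurable_comp[OF R1 R2] distr_distr[OF R2 R1] by simp_all
qed

lemma card_Bstar_loc_shift_config:
  assumes T: "\<forall>i. real T * \<theta> $ i \<in> \<int>" and s: "1 \<le> s" and lam: "lam \<in> genea ((s - 1) * T)"
  defines "z \<equiv> lattice_pt \<theta> ((s - 1) * T)"
  shows "card (Bstar_loc (shift_config ((s - 1) * T) z lam \<omega>) \<theta> T 1 [1]) = card (Bstar_loc \<omega> \<theta> T s lam)"
proof -
  define B where "B = branch (shift_config ((s - 1) * T) z lam \<omega>) 0 0 [1] T"
  have one: "[1::nat] \<in> genea 0" by (simp add: genea_def)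
  have "branch \<omega> (0 + (s - 1) * T) (0 + z) lam T = (\<lambda>(x, \<nu>). (x + z, lam @ drop (0 + 1) \<nu>)) ` B"
    unfolding B_def
    by (rule branch_relabel[OF one]) (use lam in \<open>auto simp: shift_config_def shift_index_def Pq_index_def genea_imp_all_genea split: prod.split\<close>)
  moreover have "lattice_pt \<theta> (s * T) = lattice_pt \<theta> T + z"
    using lattice_pt_add[OF T, of "s - 1"] s unfolding z_def by (cases s) (simp_all add: add.commute)
  ultimately have "Bstar_loc \<omega> \<theta> T s lam = (\<lambda>\<nu>. lam @ drop 1 \<nu>) ` {\<nu>. (lattice_pt \<theta> T, \<nu>) \<in> B}"
    unfolding Bstar_loc_eq[OF s lam] z_def[symmetric]
    by (auto simp: image_iff) (metis (no_types, lifting) case_prod_conv)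
  moreover have "Bstar_loc (shift_config ((s - 1) * T) z lam \<omega>) \<theta> T 1 [1] = {\<nu>. (lattice_pt \<theta> T, \<nu>) \<in> B}"
    using Bstar_loc_eq[OF le_refl, of "[1]" T] one by (simp add: B_def)
  moreover have "inj_on (\<lambda>\<nu>. lam @ drop 1 \<nu>) {\<nu>. (lattice_pt \<theta> T, \<nu>) \<in> B}"
  proof (rule inj_onI)
    fix \<nu> \<nu>' assume "\<nu> \<in> {\<nu>. (lattice_pt \<theta> T, \<nu>) \<in> B}" "\<nu>' \<in> {\<nu>. (lattice_pt \<theta> T, \<nu>) \<in> B}"
      and eq: "lam @ drop 1 \<nu> = lam @ drop 1 \<nu>'"
    then have "\<nu> = 1 # drop 1 \<nu>" "\<nu>' = 1 # drop 1 \<nu>'"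
      using branch_genea[OF one] genea_Cons_drop unfolding B_def by fastforce+
    with eq show "\<nu> = \<nu>'" by (metis same_append_eq)
  qed
  ultimately show ?thesis by (simp add: card_image)
qed

lemma qstar_shift:
  fixes q :: "nat \<times> (int^'d) \<Rightarrow> nat pmf"
  assumes T: "\<forall>i. real T * \<theta> $ i \<in> \<int>" and s: "1 \<le> s"
  shows "qstar q \<theta> T s = qstar (\<lambda>tx. q (fst tx + (s - 1) * T, snd tx + lattice_pt \<theta> ((s - 1) * T))) \<theta> T 1"
proof
  fix k
  define a where "a = (s - 1) * T"
  define z where "z = lattice_pt \<theta> a"
  define lam where "lam = (replicate (a + 1) 1 :: nat list)"
  define q' where "q' = (\<lambda>tx. q (fst tx + a, snd tx + z))"
  have lam: "lam \<in> genea a" unfolding lam_def by (rule replicate_genea)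
  note shift = shift_config_distr[OF lam, where q=q and z=z, folded q'_def]
  have "shift_config a z lam -` Bstar_card_event \<theta> T 1 k \<inter> space (Pq q) = Bstar_card_event \<theta> T s k"
    using card_Bstar_loc_shift_config[OF T s lam[unfolded a_def]]
    unfolding Bstar_card_event_def space_Pq by (auto simp: shift_config_def shift_index_def space_PiM a_def z_def lam_def)
  moreover have "Bstar_card_event \<theta> T 1 k \<in> sets (Pq q')"
    unfolding Bstar_card_event_def Pq_eq_PiM
    by (subst sets_PiM_cong[OF refl, of _ _ "\<lambda>_. count_space UNIV"]) (auto intro: sets_Bstar_card_event)
  ultimately have "qstar q' \<theta> T 1 k = qstar q \<theta> T s k"
    unfolding qstar_eq_measure using measure_distr[OF shift(1)] shift(2) by metis
  then show "qstar q \<theta> T s k = qstar (\<lambda>tx. q (fst tx + (s - 1) * T, snd tx + lattice_pt \<theta> ((s - 1) * T))) \<theta> T 1 k"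
    by (simp add: q'_def a_def z_def)
qed

lemma prob_space_eq_PiM_iid:
  fixes Q :: "('i \<Rightarrow> 'a) measure"
  assumes Q: "prob_space Q" "sets Q = sets (PiM UNIV (\<lambda>_. M))"
    and indep: "prob_space.indep_vars Q (\<lambda>_. M) (\<lambda>i x. x i) UNIV"
    and ident: "\<And>i. distr Q M (\<lambda>x. x i) = D"
  shows "Q = PiM UNIV (\<lambda>_. D)"
proof -
  interpret prob_space Q by (rule Q(1))
  have rv: "random_variable M (\<lambda>x. x i)" for i
    using indep unfolding indep_vars_def2 by simp
  have "Q = distr Q (PiM UNIV (\<lambda>_. M)) (\<lambda>x. \<lambda>i\<in>UNIV. x i)"
    using distr_id2[OF Q(2)[symmetric]] by (simp add: restrict_UNIV)
  also have "\<dots> = PiM UNIV (\<lambda>i. distr Q M (\<lambda>x. x i))"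
    using indep by (subst (asm) indep_vars_iff_distr_eq_PiM') (simp_all add: rv)
  finally show ?thesis by (simp add: ident)
qed

lemma qstar_distr_eq:
  fixes \<theta> :: "real^'d" and Q :: "(nat \<times> (int^'d) \<Rightarrow> nat pmf) measure"
  assumes Q: "prob_space Q" "sets Q = sets env_space"
    and Q_indep: "prob_space.indep_vars Q (\<lambda>_. pmf_space) (\<lambda>i q. q i) UNIV"
    and Q_ident: "\<forall>i j. distr Q pmf_space (\<lambda>q. q i) = distr Q pmf_space (\<lambda>q. q j)"
    and T: "\<forall>i. real T * \<theta> $ i \<in> \<int>" and s: "1 \<le> s"
  shows "distr Q (\<Pi>\<^sub>M k\<in>(UNIV::nat set). borel) (\<lambda>q. qstar q \<theta> T s)
       = distr Q (\<Pi>\<^sub>M k\<in>(UNIV::nat set). borel) (\<lambda>q. qstar q \<theta> T 1)"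
proof -
  interpret prob_space Q by (rule Q(1))
  define D where "D = distr Q pmf_space (\<lambda>q. q (0, 0))"
  define Sh where "Sh q = (\<lambda>tx\<in>UNIV. q (fst tx + (s - 1) * T, snd tx + lattice_pt \<theta> ((s - 1) * T)))"
    for q :: "nat \<times> (int^'d) \<Rightarrow> nat pmf"
  have QD: "Q = PiM UNIV (\<lambda>_. D)"
    using Q Q_indep Q_ident unfolding D_def env_space_def by (intro prob_space_eq_PiM_iid) auto
  have "prob_space D"
    unfolding D_def using Q_indep by (intro prob_space_distr) (simp add: indep_vars_def2)
  moreover have "inj (\<lambda>tx::nat \<times> (int^'d). (fst tx + (s - 1) * T, snd tx + lattice_pt \<theta> ((s - 1) * T)))"
    by (auto simp: inj_on_def prod_eq_iff)
  ultimately have Sh_distr: "distr Q Q Sh = Q"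
    unfolding QD Sh_def by (intro distr_PiM_reindex) auto
  have Sh_meas: "Sh \<in> measurable Q Q"
    unfolding QD Sh_def by (intro measurable_PiM_reindex) auto
  have qstar_meas: "(\<lambda>q. qstar q \<theta> T 1) \<in> measurable Q (\<Pi>\<^sub>M k\<in>(UNIV::nat set). borel)"
    unfolding QD by (intro measurable_qstar measurable_component_total) (simp_all add: D_def)
  have "distr Q (\<Pi>\<^sub>M k\<in>(UNIV::nat set). borel) (\<lambda>q. qstar q \<theta> T s)
      = distr Q (\<Pi>\<^sub>M k\<in>(UNIV::nat set). borel) ((\<lambda>q. qstar q \<theta> T 1) \<circ> Sh)"
    by (rule distr_cong) (auto simp: qstar_shift[OF T s] Sh_def restrict_UNIV)
  also have "\<dots> = distr Q (\<Pi>\<^sub>M k\<in>(UNIV::nat set). borel) (\<lambda>q. qstar q \<theta> T 1)"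
    using distr_distr[OF qstar_meas Sh_meas] by (simp add: Sh_distr)
  finally show ?thesis .
qed

theorem lemma4p2p3:
  fixes \<theta> :: "real^'d" and T :: nat
    and Q :: "(nat \<times> (int^'d) \<Rightarrow> nat pmf) measure"
  assumes theta: "\<theta> \<in> Delta" "\<forall>i. \<theta> $ i \<in> \<rat>"
    and T: "T \<in> Nstar_dir \<theta>"
    and Q: "prob_space Q" "sets Q = sets env_space"
    and Q_indep: "prob_space.indep_vars Q (\<lambda>_. pmf_space) (\<lambda>i q. q i) UNIV"
    and Q_ident: "\<forall>i j. distr Q pmf_space (\<lambda>q. q i) = distr Q pmf_space (\<lambda>q. q j)"
  shows
    "(\<forall>q s. 1 \<le> s \<longrightarrow>
        prob_space.indep_vars (Pq q) (\<lambda>_. count_space UNIV)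
          (\<lambda>lam \<omega>. Bstar_loc \<omega> \<theta> T s lam) (genea ((s - 1) * T))
      \<and> (\<forall>lam\<in>genea ((s - 1) * T). \<forall>lam'\<in>genea ((s - 1) * T).
           distr (Pq q) (count_space UNIV) (\<lambda>\<omega>. drop ((s - 1) * T + 1) ` Bstar_loc \<omega> \<theta> T s lam)
         = distr (Pq q) (count_space UNIV) (\<lambda>\<omega>. drop ((s - 1) * T + 1) ` Bstar_loc \<omega> \<theta> T s lam')))
   \<and> prob_space.indep_vars Q (\<lambda>_. \<Pi>\<^sub>M k\<in>(UNIV::nat set). borel) (\<lambda>s q. qstar q \<theta> T s) {1..}
   \<and> (\<forall>s\<ge>1. \<forall>s'\<ge>1.
        distr Q (\<Pi>\<^sub>M k\<in>(UNIV::nat set). borel) (\<lambda>q. qstar q \<theta> T s)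
      = distr Q (\<Pi>\<^sub>M k\<in>(UNIV::nat set). borel) (\<lambda>q. qstar q \<theta> T s'))"
proof -
  have "1 \<le> T" and T_int: "\<forall>i. real T * \<theta> $ i \<in> \<int>" using T by (auto simp: Nstar_dir_def)
  show ?thesis
  proof (intro conjI allI impI ballI)
    fix q :: "nat \<times> (int^'d) \<Rightarrow> nat pmf" and s :: nat and lam lam' assume "1 \<le> s"
      and "lam \<in> genea ((s - 1) * T)" "lam' \<in> genea ((s - 1) * T)"
    then show "distr (Pq q) (count_space UNIV) (\<lambda>\<omega>. drop ((s - 1) * T + 1) ` Bstar_loc \<omega> \<theta> T s lam)
         = distr (Pq q) (count_space UNIV) (\<lambda>\<omega>. drop ((s - 1) * T + 1) ` Bstar_loc \<omega> \<theta> T s lam')"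
      by (rule Bstar_loc_drop_distr_eq)
  next
    fix s s' :: nat assume "1 \<le> s" "1 \<le> s'"
    then show "distr Q (\<Pi>\<^sub>M k\<in>(UNIV::nat set). borel) (\<lambda>q. qstar q \<theta> T s)
      = distr Q (\<Pi>\<^sub>M k\<in>(UNIV::nat set). borel) (\<lambda>q. qstar q \<theta> T s')"
      using qstar_distr_eq[OF Q Q_indep Q_ident T_int] by metis
  qed (rule Bstar_loc_indep qstar_indep[OF Q(1) Q_indep \<open>1 \<le> T\<close>])+
qed

end
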